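(* Let $\eta,\lambda>0$ with $\eta\lambda\le\tfrac12$, $T\ge1$, $\delta\in(0,1)$, assume $\frac{\underline\sigma^2}{M^2}\ge3e^{4\eta\lambda}\sqrt{\lambda\eta\ln\frac{2T^2}{\delta}}$, and let $x(t)$ be the SGD+WD iterates from $x(0)\neq0$. On the event $\mathcal E_T$, for every $0\le t\le T$, $$\eta^{-2}\|x(t)\|_2^4\ge\frac{1-\eta\lambda}{2\eta\lambda}\big(1-e^{-4t\eta\lambda(1-\eta\lambda)}\big)\underline\sigma^2-\frac12(1-\eta\lambda)^2M^2e^{4\eta\lambda}\sqrt{\frac{1}{\lambda\eta}\ln\frac{2T^2}{\delta}}.$$ If in addition $\frac{\underline\sigma^2}{12\eta\lambda}\ge\frac{M^2}{2}e^{4\eta\lambda}\sqrt{\frac{1}{\lambda\eta}\ln\frac{2T^2}{\delta}}$, then on $\mathcal E_T$, for every $t$ with $\frac{1}{\eta\lambda}\le t\le T$, $$\eta^{-2}\|x(t)\|_2^4\ge\frac{(1-\eta\lambda)^2\underline\sigma^2}{4\eta\lambda}.$$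
   Context: Let $\Gamma$ be an index set with probability distribution $\mathcal D$; each $L_\gamma:\mathbb{R}^d\setminus\{0\}\to\mathbb{R}$ is differentiable and scale invariant ($L_\gamma(cx)=L_\gamma(x)$ for $c>0$); $M:=\sup_{\gamma}\max_{\|x\|_2=1}\|\nabla L_\gamma(x)\|_2<\infty$; $\underline\sigma>0$ satisfies $\underline\sigma^2\le\mathbb{E}_\gamma\|\nabla L_\gamma(x)\|_2^2$ for all $\|x\|_2=1$. SGD+WD: $x(t+1)=(1-\eta\lambda)x(t)-\eta\nabla L_{\gamma_t}(x(t))$ with $\gamma_t$ i.i.d. $\sim\mathcal D$; $\bar x:=x/\|x\|_2$. $\mathcal E_T$ is the event that for all $0\le t'\le t\le T-1$, $$\Big|\sum_{\tau=t'}^t(1-\eta\lambda)^{4(t-\tau)}\Big(\|\nabla L_{\gamma_\tau}(\bar x(\tau))\|_2^2-\mathbb{E}\big[\|\nabla L_{\gamma_\tau}(\bar x(\tau))\|_2^2\,\big|\,\bar x(\tau)\big]\Big)\Big|\le e^{4\eta\lambda}\frac{M^2}{4}\sqrt{\frac{1}{\lambda\eta}\ln\frac{2T^2}{\delta}}.$$ *)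

theory Defs
  imports "HOL-Probability.Probability"
begin

definition exp_sq_grad :: "'g measure \<Rightarrow> ('g \<Rightarrow> 'a::euclidean_space \<Rightarrow> 'a) \<Rightarrow> 'a \<Rightarrow> real" where
  "exp_sq_grad D grad x = (\<integral>\<gamma>. (norm (grad \<gamma> x))\<^sup>2 \<partial>D)"

definition grad_bound :: "'g measure \<Rightarrow> ('g \<Rightarrow> 'a::euclidean_space \<Rightarrow> 'a) \<Rightarrow> real" where
  "grad_bound D grad = (SUP \<gamma>\<in>space D. SUP x\<in>sphere 0 1. norm (grad \<gamma> x))"

definition event_E :: "'g measure \<Rightarrow> ('g \<Rightarrow> 'a::euclidean_space \<Rightarrow> 'a) \<Rightarrow> real \<Rightarrow> real \<Rightarrow> real \<Rightarrow> nat \<Rightarrow> real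
    \<Rightarrow> (nat \<Rightarrow> 'g) \<Rightarrow> (nat \<Rightarrow> 'a) \<Rightarrow> bool" where
  "event_E D grad \<eta> lam \<delta> T M \<gamma>s x \<longleftrightarrow>
     (\<forall>t' t. t' \<le> t \<and> t \<le> T - 1 \<longrightarrow>
       \<bar>\<Sum>\<tau>=t'..t. (1 - \<eta> * lam) ^ (4 * (t - \<tau>)) *
           ((norm (grad (\<gamma>s \<tau>) (sgn (x \<tau>))))\<^sup>2 - exp_sq_grad D grad (sgn (x \<tau>)))\<bar>
       \<le> exp (4 * \<eta> * lam) * M\<^sup>2 / 4 * sqrt (1 / (lam * \<eta>) * ln (2 * real T ^ 2 / \<delta>)))"

end

theory Submission
  imports Defs
begin

text \<open>Scale invariance makes each gradient orthogonal to its argument and homogeneous of degree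
  \<open>-1\<close>. Writing \<open>u(t) = x(t)/\<parallel>x(t)\<parallel>\<close> and \<open>g(t) = \<parallel>\<nabla>L\<^sub>\<gamma>\<^sub>t(u(t))\<parallel>\<^sup>2\<close>, the squared norm therefore
  evolves as \<open>\<parallel>x(t+1)\<parallel>\<^sup>2 = (1-\<eta>\<lambda>)\<^sup>2\<parallel>x(t)\<parallel>\<^sup>2 + \<eta>\<^sup>2 g(t)/\<parallel>x(t)\<parallel>\<^sup>2\<close>, and squaring gives the linear
  recursion \<open>\<parallel>x(t+1)\<parallel>\<^sup>4 \<ge> (1-\<eta>\<lambda>)\<^sup>4\<parallel>x(t)\<parallel>\<^sup>4 + 2(1-\<eta>\<lambda>)\<^sup>2\<eta>\<^sup>2 g(t)\<close>. Unrolled, it bounds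
  \<open>\<parallel>x(t)\<parallel>\<^sup>4\<close> below by a geometrically weighted sum of the \<open>g(\<tau>)\<close>. On \<open>\<E>\<^sub>T\<close> that sum is within the
  stated deviation of the same sum of conditional expectations, each at least \<open>\<sigma>\<^sup>2\<close>; summing the
  geometric weights and comparing \<open>(1-\<eta>\<lambda>)^(4t)\<close> with an exponential gives both bounds.\<close>

lemma scale_invariant_gradient_orthogonal:
  fixes f :: "'a::euclidean_space \<Rightarrow> real"
  assumes deriv: "\<And>y. y \<noteq> 0 \<Longrightarrow> (f has_derivative (\<lambda>h. g y \<bullet> h)) (at y)"
    and scale: "\<And>c y. y \<noteq> 0 \<Longrightarrow> c > 0 \<Longrightarrow> f (c *\<^sub>R y) = f y"
    and y: "y \<noteq> 0"
  shows "g y \<bullet> y = 0"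
proof -
  \<comment> \<open>Euler's identity: \<open>s \<mapsto> f (s y)\<close> is constant near \<open>s = 1\<close>, with derivative \<open>g y \<bullet> y\<close> there.\<close>
  have "((\<lambda>s::real. f (s *\<^sub>R y)) has_derivative (\<lambda>h. g y \<bullet> (h *\<^sub>R y))) (at 1)"
    using diff_chain_at[of "\<lambda>s. s *\<^sub>R y" "\<lambda>h. h *\<^sub>R y" 1 f "\<lambda>h. g y \<bullet> h"] deriv[OF y]
    by (simp add: o_def has_derivative_scaleR_left[OF has_derivative_ident])
  moreover have "((\<lambda>s::real. f (s *\<^sub>R y)) has_derivative (\<lambda>h. 0)) (at 1)"
    by (rule has_derivative_transform_within_open[OF has_derivative_const, of "{0<..}"])
       (auto simp: scale y)
  ultimately have "(\<lambda>h::real. g y \<bullet> (h *\<^sub>R y)) = (\<lambda>h. 0)"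
    by (rule has_derivative_unique)
  from fun_cong[OF this, of 1] show ?thesis by simp
qed

lemma scale_invariant_gradient_scaleR:
  fixes f :: "'a::euclidean_space \<Rightarrow> real"
  assumes deriv: "\<And>y. y \<noteq> 0 \<Longrightarrow> (f has_derivative (\<lambda>h. g y \<bullet> h)) (at y)"
    and scale: "\<And>c y. y \<noteq> 0 \<Longrightarrow> c > 0 \<Longrightarrow> f (c *\<^sub>R y) = f y"
    and y: "y \<noteq> 0" and c: "c > 0"
  shows "g (c *\<^sub>R y) = (1 / c) *\<^sub>R g y"
proof -
  have cy: "c *\<^sub>R y \<noteq> 0" using y c by simp
  have "((\<lambda>z. f (c *\<^sub>R z)) has_derivative (\<lambda>h. g (c *\<^sub>R y) \<bullet> (c *\<^sub>R h))) (at y)"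
    using diff_chain_at[of "\<lambda>z. c *\<^sub>R z" "\<lambda>h. c *\<^sub>R h" y f "\<lambda>h. g (c *\<^sub>R y) \<bullet> h"] deriv[OF cy]
    by (simp add: o_def has_derivative_scaleR_right[OF has_derivative_ident])
  moreover have "((\<lambda>z. f (c *\<^sub>R z)) has_derivative (\<lambda>h. g y \<bullet> h)) (at y)"
    by (rule has_derivative_transform_within_open[OF deriv[OF y], of "-{0}"])
       (auto simp: scale c y)
  ultimately have "(\<lambda>h. g (c *\<^sub>R y) \<bullet> (c *\<^sub>R h)) = (\<lambda>h. g y \<bullet> h)"
    by (rule has_derivative_unique)
  then have "c *\<^sub>R g (c *\<^sub>R y) = g y"
    by (metis (no_types) inner_scaleR_left inner_scaleR_right vector_eq_rdot)
  then have "(1 / c) *\<^sub>R g y = (1 / c) *\<^sub>R (c *\<^sub>R g (c *\<^sub>R y))" by simp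
  then show ?thesis using c by simp
qed

lemma linear_recurrence_lower_bound:
  fixes y b :: "nat \<Rightarrow> real"
  assumes rec: "\<And>t. q * y t + b t \<le> y (Suc t)" and q: "0 \<le> q" and y0: "0 \<le> y 0"
  shows "(\<Sum>\<tau>=0..s. q ^ (s - \<tau>) * b \<tau>) \<le> y (Suc s)"
proof (induction s)
  case 0
  show ?case using rec[of 0] mult_nonneg_nonneg[OF q y0] by simp
next
  case (Suc s)
  have "(\<Sum>\<tau>=0..Suc s. q ^ (Suc s - \<tau>) * b \<tau>) = q * (\<Sum>\<tau>=0..s. q ^ (s - \<tau>) * b \<tau>) + b (Suc s)"
    by (simp add: sum_distrib_left Suc_diff_le mult.assoc)
  also have "\<dots> \<le> q * y (Suc s) + b (Suc s)"
    using Suc.IH q by (simp add: mult_left_mono)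
  also have "\<dots> \<le> y (Suc (Suc s))" by (rule rec)
  finally show ?case .
qed

lemma sum_reversed_powers:
  fixes q :: real
  assumes "q \<noteq> 1"
  shows "(\<Sum>\<tau>=0..s. q ^ (s - \<tau>)) = (1 - q ^ Suc s) / (1 - q)"
  using one_diff_power_eq'[of q "Suc s"] assms
  by (simp add: atLeast0AtMost lessThan_Suc_atMost)

lemma one_minus_pow_le_exp:
  fixes a :: real
  assumes "a \<le> 1"
  shows "(1 - a) ^ n \<le> exp (- real n * a)"
proof -
  have "(1 - a) ^ n \<le> exp (- a) ^ n"
    using assms exp_minus_ge[of a] by (intro power_mono) auto
  then show ?thesis by (simp add: exp_of_nat_mult[symmetric])
qed

lemma ratio_le_div_one_minus_pow4:
  fixes a :: real
  assumes a: "0 < a" "a \<le> 1/2"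
  shows "(1 - a) / (2 * a) \<le> 2 * (1 - a)\<^sup>2 / (1 - (1 - a) ^ 4)"
proof -
  have "(1 - a) ^ 4 < 1" using a by (simp add: power_less_one_iff)
  moreover have "(1 - a) * (1 - (1 - a) ^ 4) \<le> 4 * a * (1 - a)\<^sup>2"
  proof -
    have "4 * a * (1 - a)\<^sup>2 - (1 - a) * (1 - (1 - a) ^ 4) = (1 - a) * a\<^sup>2 * (2 - 4 * a + a\<^sup>2)"
      by (simp add: power2_eq_square power_def numeral_eq_Suc algebra_simps)
    moreover have "0 \<le> (1 - a) * a\<^sup>2 * (2 - 4 * a + a\<^sup>2)" using a by simp
    ultimately show ?thesis by linarith
  qed
  ultimately show ?thesis using a by (simp add: field_simps)
qed

lemma weight_decay_geometric_sum_ge: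
  fixes a :: real
  assumes a: "0 < a" "a \<le> 1/2"
  shows "(1 - a) / (2 * a) * (1 - exp (- 4 * real (Suc s) * a * (1 - a)))
           \<le> 2 * (1 - a)\<^sup>2 * (\<Sum>\<tau>=0..s. (1 - a) ^ (4 * (s - \<tau>)))"
proof -
  define q where "q = (1 - a) ^ 4"
  have q1: "q < 1" using a by (simp add: q_def power_less_one_iff)
  have "q ^ Suc s \<le> exp (- 4 * real (Suc s) * a * (1 - a))"
  proof -
    have "q ^ Suc s = (1 - a) ^ (4 * Suc s)" by (simp only: q_def power_mult)
    also have "\<dots> \<le> exp (- real (4 * Suc s) * a)" using a by (intro one_minus_pow_le_exp) auto
    also have "\<dots> \<le> exp (- 4 * real (Suc s) * a * (1 - a))"
      using a by (simp add: mult_left_mono)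
    finally show ?thesis .
  qed
  moreover have "exp (- 4 * real (Suc s) * a * (1 - a)) \<le> 1"
    using a by (simp, intro mult_nonpos_nonneg) auto
  ultimately have "(1 - a) / (2 * a) * (1 - exp (- 4 * real (Suc s) * a * (1 - a)))
                     \<le> 2 * (1 - a)\<^sup>2 / (1 - q) * (1 - q ^ Suc s)"
    using a q1 ratio_le_div_one_minus_pow4[OF a] by (intro mult_mono) (auto simp: q_def)
  also have "\<dots> = 2 * (1 - a)\<^sup>2 * (\<Sum>\<tau>=0..s. q ^ (s - \<tau>))"
    using q1 by (simp add: sum_reversed_powers)
  finally show ?thesis by (simp add: q_def power_mult)
qed

lemma exp_neg_two_le_one_third: "exp (-2::real) \<le> 1/3"
proof -
  have "3 \<le> exp (2::real)" using exp_ge_add_one_self[of 2] by simp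
  then show ?thesis by (simp add: exp_minus field_simps)
qed

lemma weight_decay_steady_state_bound:
  fixes a t \<sigma> B :: real
  assumes a: "0 < a" "a \<le> 1/2" and t: "1 \<le> t * a" and B: "2 * B \<le> \<sigma>\<^sup>2 / (12 * a)"
  shows "(1 - a)\<^sup>2 * \<sigma>\<^sup>2 / (4 * a) \<le> (1 - a) / (2 * a) * (1 - exp (- 4 * t * a * (1 - a))) * \<sigma>\<^sup>2 - 2 * (1 - a)\<^sup>2 * B"
proof -
  have "1 * (1/2) \<le> t * a * (1 - a)" using t a by (intro mult_mono) auto
  moreover have "- 4 * t * a * (1 - a) = - 4 * (t * a * (1 - a))" by simp
  ultimately have "- 4 * t * a * (1 - a) \<le> -2" by linarith
  then have e: "exp (- 4 * t * a * (1 - a)) \<le> 1/3"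
    using exp_neg_two_le_one_third by (meson exp_le_cancel_iff order_trans)
  have "(1 - a) / (2 * a) * (2/3) * \<sigma>\<^sup>2 \<le> (1 - a) / (2 * a) * (1 - exp (- 4 * t * a * (1 - a))) * \<sigma>\<^sup>2"
    using e a by (intro mult_right_mono mult_left_mono) auto
  moreover have "2 * (1 - a)\<^sup>2 * B \<le> (1 - a)\<^sup>2 * (\<sigma>\<^sup>2 / (12 * a))"
    using mult_left_mono[OF B, of "(1 - a)\<^sup>2"] by simp
  moreover have "(1 - a) / (2 * a) * (2/3) * \<sigma>\<^sup>2 - (1 - a)\<^sup>2 * (\<sigma>\<^sup>2 / (12 * a)) - (1 - a)\<^sup>2 * \<sigma>\<^sup>2 / (4 * a)
                   = (1 - a) * \<sigma>\<^sup>2 / 3"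
    using a by (simp add: field_simps power2_eq_square)
  moreover have "0 \<le> (1 - a) * \<sigma>\<^sup>2 / 3" using a by simp
  ultimately show ?thesis by linarith
qed

text \<open>One sample path: \<open>L t\<close> and \<open>grad t\<close> stand for the loss \<open>L\<^sub>\<gamma>\<^sub>t\<close> drawn at step \<open>t\<close> and its gradient.\<close>

locale sgd_weight_decay =
  fixes L :: "nat \<Rightarrow> 'a::euclidean_space \<Rightarrow> real"
    and grad :: "nat \<Rightarrow> 'a \<Rightarrow> 'a"
    and \<eta> lam :: real
    and x :: "nat \<Rightarrow> 'a"
  assumes deriv: "\<And>t y. y \<noteq> 0 \<Longrightarrow> (L t has_derivative (\<lambda>h. grad t y \<bullet> h)) (at y)"
    and scale_invariant: "\<And>t c y. y \<noteq> 0 \<Longrightarrow> c > 0 \<Longrightarrow> L t (c *\<^sub>R y) = L t y"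
    and eta_pos: "0 < \<eta>" and lam_pos: "0 < lam" and eta_lam_le: "\<eta> * lam \<le> 1/2"
    and start: "x 0 \<noteq> 0"
    and step: "\<And>t. x (Suc t) = (1 - \<eta> * lam) *\<^sub>R x t - \<eta> *\<^sub>R grad t (x t)"
begin

lemma norm_sq_Suc:
  assumes "x t \<noteq> 0"
  shows "(norm (x (Suc t)))\<^sup>2
           = (1 - \<eta> * lam)\<^sup>2 * (norm (x t))\<^sup>2 + \<eta>\<^sup>2 * (norm (grad t (sgn (x t))))\<^sup>2 / (norm (x t))\<^sup>2"
proof -
  have orth: "orthogonal ((1 - \<eta> * lam) *\<^sub>R x t) (- \<eta> *\<^sub>R grad t (x t))"
    using scale_invariant_gradient_orthogonal[OF deriv scale_invariant assms]
    by (simp add: orthogonal_def inner_commute)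
  have "(norm (x (Suc t)))\<^sup>2 = (1 - \<eta> * lam)\<^sup>2 * (norm (x t))\<^sup>2 + \<eta>\<^sup>2 * (norm (grad t (x t)))\<^sup>2"
    using norm_add_Pythagorean[OF orth] by (simp add: step power_mult_distrib)
  moreover have "grad t (x t) = (1 / norm (x t)) *\<^sub>R grad t (sgn (x t))"
    using scale_invariant_gradient_scaleR[OF deriv scale_invariant, of "sgn (x t)" "norm (x t)"] assms
    by (simp add: sgn_zero_iff sgn_div_norm)
  ultimately show ?thesis by (simp add: power_divide)
qed

lemma iterate_nonzero: "x t \<noteq> 0"
proof (induction t)
  case 0
  show ?case by (rule start)
next
  case (Suc t)
  have "0 < (1 - \<eta> * lam)\<^sup>2 * (norm (x t))\<^sup>2" using Suc eta_lam_le by simp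
  moreover have "0 \<le> \<eta>\<^sup>2 * (norm (grad t (sgn (x t))))\<^sup>2 / (norm (x t))\<^sup>2" by simp
  ultimately have "0 < (norm (x (Suc t)))\<^sup>2" using norm_sq_Suc[OF Suc] by linarith
  then show ?case by auto
qed

lemma norm_pow4_Suc_ge:
  "(1 - \<eta> * lam) ^ 4 * norm (x t) ^ 4 + 2 * (1 - \<eta> * lam)\<^sup>2 * \<eta>\<^sup>2 * (norm (grad t (sgn (x t))))\<^sup>2
     \<le> norm (x (Suc t)) ^ 4"
proof -
  define n where "n = (norm (x t))\<^sup>2"
  define e where "e = \<eta>\<^sup>2 * (norm (grad t (sgn (x t))))\<^sup>2"
  have "0 < n" using iterate_nonzero[of t] by (simp add: n_def)
  then have "((1 - \<eta> * lam)\<^sup>2 * n)\<^sup>2 + 2 * (1 - \<eta> * lam)\<^sup>2 * e \<le> ((1 - \<eta> * lam)\<^sup>2 * n + e / n)\<^sup>2"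
    by (simp add: power2_eq_square field_simps)
  also have "\<dots> = ((norm (x (Suc t)))\<^sup>2)\<^sup>2"
    using norm_sq_Suc[OF iterate_nonzero] by (simp add: n_def e_def)
  also have "\<dots> = norm (x (Suc t)) ^ 4" by (simp flip: power_mult)
  finally show ?thesis by (simp add: n_def e_def power_mult_distrib mult.assoc flip: power_mult)
qed

lemma norm_pow4_ge_weighted_sum:
  "2 * (1 - \<eta> * lam)\<^sup>2 * \<eta>\<^sup>2 * (\<Sum>\<tau>=0..s. (1 - \<eta> * lam) ^ (4 * (s - \<tau>)) * (norm (grad \<tau> (sgn (x \<tau>))))\<^sup>2)
     \<le> norm (x (Suc s)) ^ 4"
proof -
  have "(\<Sum>\<tau>=0..s. ((1 - \<eta> * lam) ^ 4) ^ (s - \<tau>) * (2 * (1 - \<eta> * lam)\<^sup>2 * \<eta>\<^sup>2 * (norm (grad \<tau> (sgn (x \<tau>))))\<^sup>2))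
          \<le> norm (x (Suc s)) ^ 4"
    using norm_pow4_Suc_ge eta_lam_le by (intro linear_recurrence_lower_bound) (auto simp: mult.assoc)
  then show ?thesis unfolding power_mult sum_distrib_left by (simp add: mult_ac)
qed

lemma norm_pow4_lower_bound:
  fixes E :: "nat \<Rightarrow> real" and \<sigma> B :: real and T :: nat
  assumes sigma: "\<And>\<tau>. \<sigma>\<^sup>2 \<le> E \<tau>"
    and concentration: "\<And>s. s < T \<Longrightarrow>
          \<bar>\<Sum>\<tau>=0..s. (1 - \<eta> * lam) ^ (4 * (s - \<tau>)) * ((norm (grad \<tau> (sgn (x \<tau>))))\<^sup>2 - E \<tau>)\<bar> \<le> B"
    and B: "0 \<le> B" and t: "t \<le> T"
  shows "(1 - \<eta> * lam) / (2 * \<eta> * lam) * (1 - exp (- 4 * real t * \<eta> * lam * (1 - \<eta> * lam))) * \<sigma>\<^sup>2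
           - 2 * (1 - \<eta> * lam)\<^sup>2 * B \<le> norm (x t) ^ 4 / \<eta>\<^sup>2"
proof (cases t)
  case 0
  have "0 \<le> 2 * (1 - \<eta> * lam)\<^sup>2 * B" using B by simp
  moreover have "0 \<le> norm (x t) ^ 4 / \<eta>\<^sup>2" by simp
  moreover have "exp (- 4 * real t * \<eta> * lam * (1 - \<eta> * lam)) = 1" using 0 by simp
  ultimately show ?thesis by (simp only: diff_self mult_zero_right mult_zero_left)
next
  case (Suc s)
  define a where "a = \<eta> * lam"
  define w where "w \<tau> = (1 - a) ^ (4 * (s - \<tau>))" for \<tau>
  define G where "G \<tau> = (norm (grad \<tau> (sgn (x \<tau>))))\<^sup>2" for \<tau>
  have a: "0 < a" "a \<le> 1/2" using eta_pos lam_pos eta_lam_le by (simp_all add: a_def)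
  have "\<sigma>\<^sup>2 * (\<Sum>\<tau>=0..s. w \<tau>) \<le> (\<Sum>\<tau>=0..s. w \<tau> * E \<tau>)"
    using sigma a by (auto simp: sum_distrib_left w_def mult.commute intro!: sum_mono mult_right_mono)
  moreover have "(\<Sum>\<tau>=0..s. w \<tau> * G \<tau>) = (\<Sum>\<tau>=0..s. w \<tau> * E \<tau>) + (\<Sum>\<tau>=0..s. w \<tau> * (G \<tau> - E \<tau>))"
    by (simp add: sum.distrib[symmetric] algebra_simps)
  moreover have "\<bar>\<Sum>\<tau>=0..s. w \<tau> * (G \<tau> - E \<tau>)\<bar> \<le> B"
    using concentration[of s] Suc t by (simp add: w_def G_def a_def)
  ultimately have weighted: "\<sigma>\<^sup>2 * (\<Sum>\<tau>=0..s. w \<tau>) - B \<le> (\<Sum>\<tau>=0..s. w \<tau> * G \<tau>)" by linarith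
  have "(1 - a) / (2 * a) * (1 - exp (- 4 * real t * a * (1 - a))) \<le> 2 * (1 - a)\<^sup>2 * (\<Sum>\<tau>=0..s. w \<tau>)"
    using weight_decay_geometric_sum_ge[OF a, of s] by (simp only: Suc w_def)
  then have "(1 - a) / (2 * a) * (1 - exp (- 4 * real t * a * (1 - a))) * \<sigma>\<^sup>2 - 2 * (1 - a)\<^sup>2 * B
               \<le> 2 * (1 - a)\<^sup>2 * (\<Sum>\<tau>=0..s. w \<tau>) * \<sigma>\<^sup>2 - 2 * (1 - a)\<^sup>2 * B"
    using mult_right_mono zero_le_power2 by (metis diff_right_mono)
  also have "\<dots> \<le> 2 * (1 - a)\<^sup>2 * (\<Sum>\<tau>=0..s. w \<tau> * G \<tau>)"
    using mult_left_mono[OF weighted, of "2 * (1 - a)\<^sup>2"] by (simp add: algebra_simps)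
  also have "\<dots> \<le> norm (x t) ^ 4 / \<eta>\<^sup>2"
    using norm_pow4_ge_weighted_sum[of s] Suc eta_pos by (simp add: field_simps w_def G_def a_def)
  finally show ?thesis by (simp add: a_def mult.assoc)
qed

end

theorem mainTheorem14:
  fixes D :: "'g measure"
    and L :: "'g \<Rightarrow> 'a::euclidean_space \<Rightarrow> real"
    and grad :: "'g \<Rightarrow> 'a \<Rightarrow> 'a"
    and \<eta> lam \<delta> \<sigma> :: real and T :: nat
    and \<gamma>s :: "nat \<Rightarrow> 'g" and x :: "nat \<Rightarrow> 'a"
  assumes D: "prob_space D"
    and diff: "\<And>\<gamma> y. \<gamma> \<in> space D \<Longrightarrow> y \<noteq> 0 \<Longrightarrow> (L \<gamma> has_derivative (\<lambda>h. grad \<gamma> y \<bullet> h)) (at y)"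
    and scale: "\<And>\<gamma> c y. \<gamma> \<in> space D \<Longrightarrow> y \<noteq> 0 \<Longrightarrow> c > 0 \<Longrightarrow> L \<gamma> (c *\<^sub>R y) = L \<gamma> y"
    and Mfin: "bdd_above ((\<lambda>(\<gamma>, y). norm (grad \<gamma> y)) ` (space D \<times> sphere 0 1))"
    and sig_pos: "\<sigma> > 0"
    and sig: "\<And>y. norm y = 1 \<Longrightarrow> \<sigma>\<^sup>2 \<le> exp_sq_grad D grad y"
    and eta: "\<eta> > 0" and lam: "lam > 0" and etalam: "\<eta> * lam \<le> 1/2"
    and T: "T \<ge> 1" and delta: "0 < \<delta>" "\<delta> < 1"
    and ratio: "\<sigma>\<^sup>2 / (grad_bound D grad)\<^sup>2
                  \<ge> 3 * exp (4 * \<eta> * lam) * sqrt (lam * \<eta> * ln (2 * real T ^ 2 / \<delta>))"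
    and path: "\<And>t. \<gamma>s t \<in> space D"
    and x0: "x 0 \<noteq> 0"
    and step: "\<And>t. x (Suc t) = (1 - \<eta> * lam) *\<^sub>R x t - \<eta> *\<^sub>R grad (\<gamma>s t) (x t)"
    and event: "event_E D grad \<eta> lam \<delta> T (grad_bound D grad) \<gamma>s x"
  shows "(\<forall>t\<le>T. (norm (x t)) ^ 4 / \<eta>\<^sup>2 \<ge>
            (1 - \<eta> * lam) / (2 * \<eta> * lam) * (1 - exp (- 4 * real t * \<eta> * lam * (1 - \<eta> * lam))) * \<sigma>\<^sup>2
            - 1/2 * (1 - \<eta> * lam)\<^sup>2 * (grad_bound D grad)\<^sup>2 * exp (4 * \<eta> * lam)
                * sqrt (1 / (lam * \<eta>) * ln (2 * real T ^ 2 / \<delta>)))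
       \<and> (\<sigma>\<^sup>2 / (12 * \<eta> * lam) \<ge> (grad_bound D grad)\<^sup>2 / 2 * exp (4 * \<eta> * lam)
                * sqrt (1 / (lam * \<eta>) * ln (2 * real T ^ 2 / \<delta>))
          \<longrightarrow> (\<forall>t. 1 / (\<eta> * lam) \<le> real t \<and> t \<le> T \<longrightarrow>
                 (norm (x t)) ^ 4 / \<eta>\<^sup>2 \<ge> (1 - \<eta> * lam)\<^sup>2 * \<sigma>\<^sup>2 / (4 * \<eta> * lam)))"
proof -
  \<comment> \<open>Both bounds hold pathwise on the event.\<close>
  interpret sgd_weight_decay "\<lambda>t. L (\<gamma>s t)" "\<lambda>t. grad (\<gamma>s t)" \<eta> lam x
    using diff scale path eta lam etalam x0 step by unfold_locales auto
  define B where "B = exp (4 * \<eta> * lam) * (grad_bound D grad)\<^sup>2 / 4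
                        * sqrt (1 / (lam * \<eta>) * ln (2 * real T ^ 2 / \<delta>))"
  have "1 \<le> real T ^ 2" using T by simp
  then have "1 < 2 * real T ^ 2 / \<delta>" using delta by (simp add: field_simps)
  then have B: "0 \<le> B" using eta lam by (simp add: B_def)
  have bound: "(1 - \<eta> * lam) / (2 * \<eta> * lam) * (1 - exp (- 4 * real t * \<eta> * lam * (1 - \<eta> * lam))) * \<sigma>\<^sup>2
                 - 2 * (1 - \<eta> * lam)\<^sup>2 * B \<le> norm (x t) ^ 4 / \<eta>\<^sup>2" if "t \<le> T" for t
    using norm_pow4_lower_bound[where E = "\<lambda>\<tau>. exp_sq_grad D grad (sgn (x \<tau>))", OF _ _ B that]
      sig event
    by (auto simp: norm_sgn iterate_nonzero event_E_def B_def)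
  have steady: "(1 - \<eta> * lam)\<^sup>2 * \<sigma>\<^sup>2 / (4 * \<eta> * lam) \<le> norm (x t) ^ 4 / \<eta>\<^sup>2"
    if "2 * B \<le> \<sigma>\<^sup>2 / (12 * (\<eta> * lam))" "1 / (\<eta> * lam) \<le> real t" "t \<le> T" for t
  proof -
    have a: "0 < \<eta> * lam" using eta lam by simp
    have "1 \<le> real t * (\<eta> * lam)" using that(2) a by (simp add: field_simps)
    from weight_decay_steady_state_bound[OF a etalam this that(1)] bound[OF that(3)]
    show ?thesis by (simp only: mult.assoc)
  qed
  show ?thesis
    using bound steady by (auto simp: B_def mult_ac)
qed

end
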